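(* Let $k\ge2$ be an integer and $p$ an odd prime not dividing $k$. Let $$F(t)={}_{k-1}F_{k-2}\left(\tfrac1k,\tfrac2k,\ldots,\tfrac{k-1}{k};1,1,\ldots,1\,\middle|\,t\right)=\sum_{n\ge0}\frac{(\frac1k)_n(\frac2k)_n\cdots(\frac{k-1}{k})_n}{(n!)^{k-1}}t^n .$$ Then $F(t)\in\mathbb{Z}_p[[t]]$ and for all integers $s\ge1$, $$\frac{F(t)}{F(t^p)}\equiv \frac{F_{p^s}(t)}{F_{p^{s-1}}(t^p)}\pmod{p^s},$$ as power series in $\mathbb{Z}_p[[t]]$ (coefficientwise).
   Context: $(a)_n=a(a+1)\cdots(a+n-1)$ denotes the Pochhammer symbol; there are $k-1$ upper parameters $\frac1k,\dots,\frac{k-1}k$ and $k-2$ lower parameters all equal to $1$. For a power series $G(t)$ and an integer $m\ge1$, $G_m(t)$ denotes its truncation: all terms of degree $\ge m$ are deleted; $G_m(t^p)$ denotes this truncation with $t$ replaced by $t^p$. *)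

theory Defs
  imports "HOL-Computational_Algebra.Computational_Algebra"
begin

definition hyp_coeff :: "nat \<Rightarrow> nat \<Rightarrow> rat" where
  "hyp_coeff k n = (\<Prod>j\<in>{1..k-1}. pochhammer (of_nat j / of_nat k) n) / (fact n) ^ (k - 1)"

definition hypF :: "nat \<Rightarrow> rat fps" where
  "hypF k = Abs_fps (hyp_coeff k)"

text \<open>A rational number lies in Z_p (its reduced denominator is prime to p).\<close>
definition p_integral :: "nat \<Rightarrow> rat \<Rightarrow> bool" where
  "p_integral p x \<longleftrightarrow> \<not> (int p dvd snd (quotient_of x))"

definition fps_cong_mod :: "nat \<Rightarrow> nat \<Rightarrow> rat fps \<Rightarrow> rat fps \<Rightarrow> bool" where
  "fps_cong_mod p s f g \<longleftrightarrow> (\<forall>n. p_integral p ((f $ n - g $ n) / (of_nat p) ^ s))"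

end

theory Submission
  imports Defs "HOL-Number_Theory.Number_Theory"
begin

(* The coefficients A n = (k n)! / ((n!)^k k^(k n)) of F satisfy Dwork's hypotheses:
   A n = g n * A (n div p), where g n is p-integral and g n = g n' mod p^(r+1) whenever
   n = n' mod p^(r+1). Both facts come from splitting off the p-part of the factorials
   and, for the congruence, from Euler's theorem.
   Under these hypotheses the coefficients of F(t) F_(p^s)(t^p) - F_(p^(s+1))(t) F(t^p)
   are sums of A (M - j) A j Psi (M - j) j over j < p^s for an antisymmetric kernel Psi.
   Splitting off the lowest base-p digit of j writes such a sum as p times two sums of
   the same shape with s - 1 in place of s, so induction gives divisibility by p^(s+1).
   Dividing by the p-adic units F(t^p) and F_(p^s)(t^p) yields the congruence. *)

section \<open>p-integral rational numbers\<close>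

lemma p_integral_iff_fraction:
  "p_integral p x \<longleftrightarrow> (\<exists>a b. \<not> int p dvd b \<and> x = of_int a / of_int b)"
proof
  assume "p_integral p x"
  then show "\<exists>a b. \<not> int p dvd b \<and> x = of_int a / of_int b"
    unfolding p_integral_def by (metis prod.collapse quotient_of_div)
next
  assume "\<exists>a b. \<not> int p dvd b \<and> x = of_int a / of_int b"
  then obtain a b where b: "\<not> int p dvd b" and x: "x = of_int a / of_int b" by blast
  obtain c d where q: "quotient_of x = (c, d)" by (cases "quotient_of x")
  have "d > 0" "coprime c d" using q quotient_of_denom_pos quotient_of_coprime by blast+
  moreover have "b \<noteq> 0" using b by auto
  moreover have "of_int a / of_int b = (of_int c / of_int d :: rat)"
    using x q quotient_of_div by metis
  ultimately have "rat_of_int a * rat_of_int d = rat_of_int c * rat_of_int b"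
    by (simp add: frac_eq_eq)
  then have "c * b = a * d" by (simp flip: of_int_mult)
  then have "d dvd b"
    using \<open>coprime c d\<close> by (metis coprime_commute coprime_dvd_mult_right_iff dvd_triv_right)
  then show "p_integral p x" unfolding p_integral_def using q b dvd_trans by auto
qed

lemma p_integral_fraction: "\<not> int p dvd b \<Longrightarrow> p_integral p (of_int a / of_int b)"
  unfolding p_integral_iff_fraction by blast

lemma p_integral_of_int [simp]: "prime p \<Longrightarrow> p_integral p (of_int a)"
  using p_integral_fraction[of p 1 a] by (simp add: prime_nat_iff)

lemma p_integral_0 [simp]: "prime p \<Longrightarrow> p_integral p 0"
  using p_integral_of_int[of p 0] by simp

lemma p_integral_1 [simp]: "prime p \<Longrightarrow> p_integral p 1"
  using p_integral_of_int[of p 1] by simp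

lemma p_integral_add [intro]:
  assumes "prime p" "p_integral p x" "p_integral p y"
  shows "p_integral p (x + y)"
proof -
  obtain a b c d where b: "\<not> int p dvd b" "x = of_int a / of_int b"
    and d: "\<not> int p dvd d" "y = of_int c / of_int d"
    using assms unfolding p_integral_iff_fraction by blast
  have "b \<noteq> 0" "d \<noteq> 0" using b d by auto
  then have "x + y = of_int (a * d + c * b) / of_int (b * d)"
    using b d by (simp add: field_simps)
  moreover have "\<not> int p dvd b * d" using assms(1) b d by (simp add: prime_dvd_mult_iff)
  ultimately show ?thesis using p_integral_fraction by metis
qed

lemma p_integral_mult [intro]:
  assumes "prime p" "p_integral p x" "p_integral p y"
  shows "p_integral p (x * y)"
proof -
  obtain a b c d where b: "\<not> int p dvd b" "x = of_int a / of_int b"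
    and d: "\<not> int p dvd d" "y = of_int c / of_int d"
    using assms unfolding p_integral_iff_fraction by blast
  have "x * y = of_int (a * c) / of_int (b * d)" using b d by simp
  moreover have "\<not> int p dvd b * d" using assms(1) b d by (simp add: prime_dvd_mult_iff)
  ultimately show ?thesis using p_integral_fraction by metis
qed

lemma p_integral_uminus [intro]: "p_integral p x \<Longrightarrow> p_integral p (- x)"
  unfolding p_integral_iff_fraction by (metis minus_divide_left of_int_minus)

lemma p_integral_diff [intro]:
  "prime p \<Longrightarrow> p_integral p x \<Longrightarrow> p_integral p y \<Longrightarrow> p_integral p (x - y)"
  using p_integral_add[of p x "- y"] by auto

lemma p_integral_divide_int:
  assumes "prime p" "p_integral p x" "\<not> int p dvd d"
  shows "p_integral p (x / of_int d)"
proof -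
  obtain a b where b: "\<not> int p dvd b" "x = of_int a / of_int b"
    using assms unfolding p_integral_iff_fraction by blast
  have "x / of_int d = of_int a / of_int (b * d)" using b by simp
  moreover have "\<not> int p dvd b * d" using assms b by (simp add: prime_dvd_mult_iff)
  ultimately show ?thesis using p_integral_fraction by metis
qed

lemma p_integral_sum:
  "prime p \<Longrightarrow> (\<And>i. i \<in> A \<Longrightarrow> p_integral p (f i)) \<Longrightarrow> p_integral p (\<Sum>i\<in>A. f i)"
  by (induction A rule: infinite_finite_induct) auto

definition p_divisible :: "nat \<Rightarrow> nat \<Rightarrow> rat \<Rightarrow> bool" where
  "p_divisible p s x \<longleftrightarrow> p_integral p (x / of_nat p ^ s)"

lemma fps_cong_mod_iff_p_divisible:
  "fps_cong_mod p s f g \<longleftrightarrow> (\<forall>n. p_divisible p s ((f - g) $ n))"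
  unfolding fps_cong_mod_def p_divisible_def by simp

lemma p_divisible_0_iff [simp]: "p_divisible p 0 x \<longleftrightarrow> p_integral p x"
  unfolding p_divisible_def by simp

lemma p_divisible_zero [simp]: "prime p \<Longrightarrow> p_divisible p s 0"
  unfolding p_divisible_def by simp

lemma p_divisible_add:
  "prime p \<Longrightarrow> p_divisible p s x \<Longrightarrow> p_divisible p s y \<Longrightarrow> p_divisible p s (x + y)"
  unfolding p_divisible_def by (simp add: add_divide_distrib p_integral_add)

lemma p_divisible_uminus: "p_divisible p s x \<Longrightarrow> p_divisible p s (- x)"
  unfolding p_divisible_def by (simp add: p_integral_uminus)

lemma p_divisible_diff:
  "prime p \<Longrightarrow> p_divisible p s x \<Longrightarrow> p_divisible p s y \<Longrightarrow> p_divisible p s (x - y)"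
  using p_divisible_add[of p s x "- y"] p_divisible_uminus[of p s y] by simp

lemma p_divisible_sum:
  "prime p \<Longrightarrow> (\<And>i. i \<in> A \<Longrightarrow> p_divisible p s (f i)) \<Longrightarrow> p_divisible p s (\<Sum>i\<in>A. f i)"
  by (induction A rule: infinite_finite_induct) (auto intro: p_divisible_add)

lemma p_divisible_mult:
  "prime p \<Longrightarrow> p_divisible p a x \<Longrightarrow> p_divisible p b y \<Longrightarrow> p_divisible p (a + b) (x * y)"
  unfolding p_divisible_def power_add times_divide_times_eq[symmetric] by (rule p_integral_mult)

lemma p_divisible_mult_integral:
  assumes "prime p" "p_divisible p s x" "p_integral p y"
  shows "p_divisible p s (x * y)" and "p_divisible p s (y * x)"
  using p_divisible_mult[of p s x 0 y] assms by (simp_all add: mult.commute)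

lemma p_divisible_times_p: "prime p \<Longrightarrow> p_divisible p s x \<Longrightarrow> p_divisible p (Suc s) (of_nat p * x)"
  unfolding p_divisible_def by (simp add: prime_gt_0_nat)

lemma p_divisible_divide_p:
  "p_divisible p (Suc s) x \<Longrightarrow> p_divisible p s (x / of_nat p)"
  unfolding p_divisible_def by (simp add: mult.commute)

lemma p_divisible_divide_int:
  "prime p \<Longrightarrow> p_divisible p s x \<Longrightarrow> \<not> int p dvd d \<Longrightarrow> p_divisible p s (x / of_int d)"
  unfolding p_divisible_def
  by (metis p_integral_divide_int divide_divide_eq_left mult.commute)

lemma p_divisible_of_int: "prime p \<Longrightarrow> int p ^ s dvd a \<Longrightarrow> p_divisible p s (of_int a)"
  unfolding p_divisible_def by (auto elim!: dvdE simp: prime_gt_0_nat)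

section \<open>Arithmetic of base-p digits\<close>

lemma sum_lessThan_mult_digits:
  fixes f :: "nat \<Rightarrow> 'a::comm_monoid_add"
  shows "(\<Sum>j<N * p. f j) = (\<Sum>j1<N. \<Sum>j0<p. f (j0 + p * j1))"
proof -
  have "(\<Sum>j<N * p. f j) = (\<Sum>j1<N. \<Sum>j\<in>{j1 * p..<j1 * p + p}. f j)"
    by (rule sum.nat_group[symmetric])
  also have "\<dots> = (\<Sum>j1<N. \<Sum>j0<p. f (j0 + p * j1))"
  proof (rule sum.cong[OF refl])
    fix j1
    have "{j1 * p..<j1 * p + p} = (\<lambda>j0. j0 + p * j1) ` {..<p}"
    proof (intro equalityI subsetI)
      fix j assume "j \<in> {j1 * p..<j1 * p + p}"
      then show "j \<in> (\<lambda>j0. j0 + p * j1) ` {..<p}"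
        by (intro image_eqI[of _ _ "j - j1 * p"]) (auto simp: mult.commute)
    qed (auto simp: mult.commute)
    then show "(\<Sum>j\<in>{j1 * p..<j1 * p + p}. f j) = (\<Sum>j0<p. f (j0 + p * j1))"
      by (simp add: sum.reindex inj_on_def)
  qed
  finally show ?thesis .
qed

lemma sub_digits_no_borrow:
  fixes p :: nat
  assumes "j0 \<le> c" "c < p"
  shows "j0 + p * j1 \<le> c + p * q \<longleftrightarrow> j1 \<le> q"
    and "j1 \<le> q \<Longrightarrow> c + p * q - (j0 + p * j1) = (c - j0) + p * (q - j1)"
proof -
  show "j0 + p * j1 \<le> c + p * q \<longleftrightarrow> j1 \<le> q"
  proof
    assume "j0 + p * j1 \<le> c + p * q"
    then have "p * j1 < p * Suc q" using assms by simp
    then show "j1 \<le> q" by (metis less_Suc_eq_le mult_less_cancel1)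
  next
    assume "j1 \<le> q"
    then have "p * j1 \<le> p * q" by (rule mult_le_mono2)
    then show "j0 + p * j1 \<le> c + p * q" using assms by linarith
  qed
  show "c + p * q - (j0 + p * j1) = (c - j0) + p * (q - j1)" if "j1 \<le> q"
  proof -
    obtain d where "q = j1 + d" using \<open>j1 \<le> q\<close> le_Suc_ex by blast
    then show ?thesis using assms by (simp add: algebra_simps)
  qed
qed

lemma sub_digits_borrow:
  fixes p :: nat
  assumes "c < j0" "j0 < p"
  shows "j0 + p * j1 \<le> c + p * q \<longleftrightarrow> j1 < q"
    and "j1 < q \<Longrightarrow> c + p * q - (j0 + p * j1) = (c + p - j0) + p * (q - 1 - j1)"
proof -
  show "j0 + p * j1 \<le> c + p * q \<longleftrightarrow> j1 < q"
  proof
    assume "j0 + p * j1 \<le> c + p * q"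
    then have "p * j1 < p * q" using assms by linarith
    then show "j1 < q" by simp
  next
    assume "j1 < q"
    then have "p * Suc j1 \<le> p * q" by (rule mult_le_mono2[OF Suc_leI])
    then show "j0 + p * j1 \<le> c + p * q" using assms by simp
  qed
  show "c + p * q - (j0 + p * j1) = (c + p - j0) + p * (q - 1 - j1)" if "j1 < q"
  proof -
    obtain d where "q = Suc (j1 + d)" using \<open>j1 < q\<close> less_iff_Suc_add by blast
    then show ?thesis using assms by (simp add: algebra_simps)
  qed
qed

lemma digit_shift_cong:
  fixes p :: nat
  assumes "i mod p ^ r = i' mod p ^ r"
  shows "(a + p * i) mod p ^ Suc r = (a + p * i') mod p ^ Suc r"
proof -
  have "(p * i) mod p ^ Suc r = (p * i') mod p ^ Suc r"
    using assms by (simp add: mod_mult_mult1)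
  then show ?thesis by (metis mod_add_right_eq)
qed

lemma digit_less_mult_iff:
  fixes p :: nat
  assumes "a < p"
  shows "a + p * i < p * P \<longleftrightarrow> i < P"
proof
  assume "a + p * i < p * P"
  then have "p * i < p * P" by linarith
  then show "i < P" by simp
next
  assume "i < P"
  then have "p * Suc i \<le> p * P" by (intro mult_le_mono2) simp
  then show "a + p * i < p * P" using assms by simp
qed

lemma add_mult_prime_power_div_mod:
  fixes p :: nat
  assumes "p > 0"
  shows "(n + m * p ^ Suc r) mod p = n mod p" and "(n + m * p ^ Suc r) div p = n div p + m * p ^ r"
proof -
  have eq: "n + m * p ^ Suc r = n + (m * p ^ r) * p" by (simp add: mult_ac)
  show "(n + m * p ^ Suc r) mod p = n mod p" unfolding eq by (rule mod_mult_self1)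
  show "(n + m * p ^ Suc r) div p = n div p + m * p ^ r" unfolding eq using assms by simp
qed

section \<open>Power series with p-integral coefficients\<close>

lemma fps_compose_X_power_nth:
  assumes "p > 0"
  shows "(f oo fps_X ^ p) $ n = (if p dvd n then f $ (n div p) else (0 :: 'a :: comm_ring_1))"
proof -
  have "(f oo fps_X ^ p) $ n = (\<Sum>i\<in>{0..n}. if i = n div p \<and> p dvd n then f $ i else 0)"
    unfolding fps_compose_nth power_mult[symmetric] fps_X_power_nth
    using assms by (intro sum.cong refl) auto
  also have "\<dots> = (if p dvd n then f $ (n div p) else 0)"
    by (cases "p dvd n") (simp_all add: sum.delta')
  finally show ?thesis .
qed

lemma fps_mult_compose_X_power_nth:
  fixes f h :: "'a :: comm_ring_1 fps"
  assumes "a < p"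
  shows "(f * (h oo fps_X ^ p)) $ (a + p * M) = (\<Sum>i\<le>M. f $ (a + p * i) * h $ (M - i))"
proof -
  let ?N = "a + p * M"
  have p: "p > 0" using assms by simp
  have "(f * (h oo fps_X ^ p)) $ ?N = (\<Sum>i\<in>{0..?N}. f $ i * (h oo fps_X ^ p) $ (?N - i))"
    by (rule fps_mult_nth)
  also have "\<dots> = (\<Sum>i\<in>(\<lambda>i. a + p * i) ` {..M}. f $ i * (h oo fps_X ^ p) $ (?N - i))"
  proof (rule sum.mono_neutral_right)
    show "(\<lambda>i. a + p * i) ` {..M} \<subseteq> {0..?N}" by auto
    show "\<forall>i\<in>{0..?N} - (\<lambda>i. a + p * i) ` {..M}. f $ i * (h oo fps_X ^ p) $ (?N - i) = 0"
    proof
      fix i assume i: "i \<in> {0..?N} - (\<lambda>i. a + p * i) ` {..M}"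
      have "\<not> p dvd ?N - i"
      proof
        assume "p dvd ?N - i"
        then obtain c where "?N - i = p * c" by (elim dvdE)
        moreover have iN: "i \<le> ?N" using i by simp
        ultimately have "?N = i + p * c" by simp
        then have "i mod p = a" using assms by (metis mod_mult_self2 mod_less)
        moreover have "i div p \<le> M"
          using div_le_mono[OF iN, of p] assms by simp
        ultimately have "i \<in> (\<lambda>i. a + p * i) ` {..M}"
          by (metis atMost_iff image_eqI div_mult_mod_eq add.commute mult.commute)
        then show False using i by blast
      qed
      then show "f $ i * (h oo fps_X ^ p) $ (?N - i) = 0" by (simp add: fps_compose_X_power_nth[OF p])
    qed
  qed simp
  also have "\<dots> = (\<Sum>i\<le>M. f $ (a + p * i) * (h oo fps_X ^ p) $ (p * (M - i)))"
    using p by (subst sum.reindex) (auto simp: inj_on_def diff_mult_distrib2 intro!: sum.cong)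
  also have "\<dots> = (\<Sum>i\<le>M. f $ (a + p * i) * h $ (M - i))"
    using p by (simp add: fps_compose_X_power_nth)
  finally show ?thesis .
qed

lemma fps_mult_p_integral:
  assumes "prime p" "\<And>n. p_integral p (f $ n)" "\<And>n. p_integral p (g $ n)"
  shows "p_integral p ((f * g) $ n)"
  unfolding fps_mult_nth using assms by (intro p_integral_sum p_integral_mult) auto

lemma fps_mult_p_divisible:
  assumes "prime p" "\<And>n. p_divisible p s (f $ n)" "\<And>n. p_integral p (g $ n)"
  shows "p_divisible p s ((f * g) $ n)"
  unfolding fps_mult_nth using assms by (intro p_divisible_sum p_divisible_mult_integral(1)) auto

lemma fps_inverse_p_integral:
  assumes p: "prime p" and f0: "f $ 0 = 1" and f: "\<And>n. p_integral p (f $ n)"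
  shows "p_integral p (inverse f $ n)"
proof -
  have "p_integral p (fps_right_inverse_constructor f 1 n)"
  proof (induction n rule: less_induct)
    case (less n)
    show ?case
    proof (cases n)
      case (Suc m)
      have "p_integral p (\<Sum>i\<in>{1..Suc m}. f $ i * fps_right_inverse_constructor f 1 (Suc m - i))"
        using less Suc p f by (intro p_integral_sum p_integral_mult) auto
      then show ?thesis unfolding Suc by (simp del: sum.cl_ivl_Suc add: p_integral_uminus)
    qed (simp add: p)
  qed
  then show ?thesis using f0 by (simp add: fps_inverse_def)
qed

lemma fps_compose_X_power_p_integral:
  assumes "prime p" "\<And>n. p_integral p (f $ n)"
  shows "p_integral p ((f oo fps_X ^ p) $ n)"
  using assms by (simp add: fps_compose_X_power_nth prime_gt_0_nat)

lemma fps_cong_mod_divide: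
  fixes F F' G H :: "rat fps"
  assumes p: "prime p"
    and G: "G $ 0 = 1" "\<And>n. p_integral p (G $ n)"
    and H: "H $ 0 = 1" "\<And>n. p_integral p (H $ n)"
    and cross: "\<And>n. p_divisible p s ((F * H - F' * G) $ n)"
  shows "fps_cong_mod p s (F / G) (F' / H)"
proof -
  have "F / G - F' / H = (F * H - F' * G) * inverse (G * H)"
    using G(1) H(1) by (simp add: fps_divide_unit fps_inverse_mult algebra_simps inverse_mult_eq_1')
  moreover have "p_integral p (inverse (G * H) $ n)" for n
    using G H p by (intro fps_inverse_p_integral fps_mult_p_integral) auto
  ultimately show ?thesis
    unfolding fps_cong_mod_iff_p_divisible using fps_mult_p_divisible[OF p cross] by simp
qed

section \<open>Dwork's congruences\<close>

definition dwork_kernel :: "nat \<Rightarrow> (nat \<Rightarrow> nat \<Rightarrow> rat) \<Rightarrow> bool" where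
  "dwork_kernel p \<Psi> \<longleftrightarrow> (\<forall>i j. \<Psi> j i = - \<Psi> i j) \<and> (\<forall>i j. p_integral p (\<Psi> i j)) \<and>
     (\<forall>r i j i' j'. i mod p ^ r = i' mod p ^ r \<longrightarrow> j mod p ^ r = j' mod p ^ r \<longrightarrow>
        p_divisible p (Suc r) (\<Psi> i j - \<Psi> i' j'))"

lemma dwork_kernel_p_divisible:
  assumes "dwork_kernel p \<Psi>"
  shows "p_divisible p 1 (\<Psi> i j)"
proof -
  have "\<Psi> 0 0 = - \<Psi> 0 0" using assms unfolding dwork_kernel_def by blast
  then have "\<Psi> 0 0 = 0" by simp
  moreover have "p_divisible p (Suc 0) (\<Psi> i j - \<Psi> 0 0)"
    using assms unfolding dwork_kernel_def by (metis mod_by_1 power_0)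
  ultimately show ?thesis by simp
qed

definition dwork_term :: "(nat \<Rightarrow> rat) \<Rightarrow> (nat \<Rightarrow> nat \<Rightarrow> rat) \<Rightarrow> nat \<Rightarrow> nat \<Rightarrow> rat" where
  "dwork_term A \<Psi> M j = (if j \<le> M then A (M - j) * A j * \<Psi> (M - j) j else 0)"

definition dwork_sum :: "nat \<Rightarrow> (nat \<Rightarrow> rat) \<Rightarrow> (nat \<Rightarrow> nat \<Rightarrow> rat) \<Rightarrow> nat \<Rightarrow> nat \<Rightarrow> rat" where
  "dwork_sum p A \<Psi> s M = (\<Sum>j<p ^ s. dwork_term A \<Psi> M j)"

text \<open>With (lo, hi) = (0, c) this collects the pairs of lowest digits summing to c,
  with (lo, hi) = (c + 1, p - 1) those summing to c + p. The division by p is exact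
  because a Dwork kernel vanishes modulo p.\<close>
definition kernel_contraction ::
    "nat \<Rightarrow> (nat \<Rightarrow> rat) \<Rightarrow> (nat \<Rightarrow> nat \<Rightarrow> rat) \<Rightarrow> nat \<Rightarrow> nat \<Rightarrow> nat \<Rightarrow> nat \<Rightarrow> rat" where
  "kernel_contraction p g \<Psi> lo hi i j =
     (\<Sum>d\<in>{lo..hi}. g ((lo + hi - d) + p * i) * g (d + p * j) * \<Psi> ((lo + hi - d) + p * i) (d + p * j))
       / of_nat p"

lemma kernel_contraction_antisym:
  assumes "\<And>i j. \<Psi> j i = - \<Psi> i j"
  shows "kernel_contraction p g \<Psi> lo hi j i = - kernel_contraction p g \<Psi> lo hi i j"
proof -
  let ?w = "\<lambda>d d'. g (d + p * j) * g (d' + p * i) * \<Psi> (d + p * j) (d' + p * i)"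
  have "(\<Sum>d\<in>{lo..hi}. ?w (lo + hi - d) d) =
      (\<Sum>d\<in>{lo..hi}. ?w (lo + hi - (hi + lo - d)) (hi + lo - d))"
    by (rule sum.atLeastAtMost_rev)
  also have "\<dots> = (\<Sum>d\<in>{lo..hi}. - (g ((lo + hi - d) + p * i) * g (d + p * j) *
                      \<Psi> ((lo + hi - d) + p * i) (d + p * j)))"
  proof (rule sum.cong[OF refl])
    fix d assume "d \<in> {lo..hi}"
    then have "lo + hi - (hi + lo - d) = d" by simp
    then show "?w (lo + hi - (hi + lo - d)) (hi + lo - d) = - (g ((lo + hi - d) + p * i) *
        g (d + p * j) * \<Psi> ((lo + hi - d) + p * i) (d + p * j))"
      using assms[of "(lo + hi - d) + p * i" "d + p * j"] by (simp add: add.commute)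
  qed
  finally show ?thesis unfolding kernel_contraction_def by (simp add: sum_negf)
qed

locale dwork_factorization =
  fixes p :: nat and A g :: "nat \<Rightarrow> rat"
  assumes prime: "prime p"
    and A_factor: "\<And>n. A n = g n * A (n div p)"
    and A_integral: "\<And>n. p_integral p (A n)"
    and g_integral: "\<And>n. p_integral p (g n)"
    and g_cong: "\<And>r n n'. n mod p ^ Suc r = n' mod p ^ Suc r \<Longrightarrow> p_divisible p (Suc r) (g n - g n')"
begin

lemma p_pos: "p > 0"
  using prime by (simp add: prime_gt_0_nat)

lemma A_digit: "a < p \<Longrightarrow> A (a + p * b) = g (a + p * b) * A b"
  using A_factor[of "a + p * b"] by simp

lemma weighted_kernel_cong:
  assumes \<Psi>: "dwork_kernel p \<Psi>"
    and x: "x mod p ^ Suc r = x' mod p ^ Suc r" and y: "y mod p ^ Suc r = y' mod p ^ Suc r"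
  shows "p_divisible p (Suc (Suc r)) (g x * g y * \<Psi> x y - g x' * g y' * \<Psi> x' y')"
proof -
  have gg: "p_divisible p (Suc r) (g x * g y - g x' * g y')"
  proof -
    have "g x * g y - g x' * g y' = (g x - g x') * g y + g x' * (g y - g y')"
      by (simp add: algebra_simps)
    then show ?thesis
      using g_cong[OF x] g_cong[OF y] g_integral prime
      by (simp add: p_divisible_add p_divisible_mult_integral)
  qed
  have "p_divisible p (Suc r + 1) ((g x * g y - g x' * g y') * \<Psi> x y)"
    using p_divisible_mult[OF prime gg dwork_kernel_p_divisible[OF \<Psi>]] .
  moreover have "p_divisible p (Suc (Suc r)) (g x' * g y' * (\<Psi> x y - \<Psi> x' y'))"
    using \<Psi> x y prime g_integral unfolding dwork_kernel_def
    by (blast intro: p_divisible_mult_integral(2) p_integral_mult)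
  moreover have "g x * g y * \<Psi> x y - g x' * g y' * \<Psi> x' y'
      = (g x * g y - g x' * g y') * \<Psi> x y + g x' * g y' * (\<Psi> x y - \<Psi> x' y')"
    by (simp add: algebra_simps)
  ultimately show ?thesis using p_divisible_add[OF prime] by simp
qed

lemma dwork_kernel_contraction:
  assumes \<Psi>: "dwork_kernel p \<Psi>"
  shows "dwork_kernel p (kernel_contraction p g \<Psi> lo hi)"
proof -
  let ?W = "\<lambda>i j d. g ((lo + hi - d) + p * i) * g (d + p * j) * \<Psi> ((lo + hi - d) + p * i) (d + p * j)"
  have "p_integral p (kernel_contraction p g \<Psi> lo hi i j)" for i j
  proof -
    have "p_divisible p (Suc 0) (\<Sum>d\<in>{lo..hi}. ?W i j d)"
      using dwork_kernel_p_divisible[OF \<Psi>] g_integral prime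
      by (intro p_divisible_sum p_divisible_mult_integral(2) p_integral_mult) auto
    then show ?thesis unfolding kernel_contraction_def using p_divisible_divide_p by fastforce
  qed
  moreover have "p_divisible p (Suc r)
      (kernel_contraction p g \<Psi> lo hi i j - kernel_contraction p g \<Psi> lo hi i' j')"
    if "i mod p ^ r = i' mod p ^ r" "j mod p ^ r = j' mod p ^ r" for r i j i' j'
  proof -
    have "p_divisible p (Suc (Suc r)) (\<Sum>d\<in>{lo..hi}. ?W i j d - ?W i' j' d)"
      by (intro p_divisible_sum prime weighted_kernel_cong[OF \<Psi>] digit_shift_cong that)
    then show ?thesis
      unfolding kernel_contraction_def sum_subtractf diff_divide_distrib[symmetric]
      by (rule p_divisible_divide_p)
  qed
  moreover have "kernel_contraction p g \<Psi> lo hi j i = - kernel_contraction p g \<Psi> lo hi i j" for i j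
    using \<Psi> unfolding dwork_kernel_def by (blast intro: kernel_contraction_antisym)
  ultimately show ?thesis unfolding dwork_kernel_def by blast
qed

lemma dwork_term_no_borrow:
  assumes "j0 \<le> c" "c < p"
  shows "dwork_term A \<Psi> (c + p * q) (j0 + p * j1) =
    (if j1 \<le> q then A (q - j1) * A j1 * (g ((c - j0) + p * (q - j1)) * g (j0 + p * j1) *
       \<Psi> ((c - j0) + p * (q - j1)) (j0 + p * j1)) else 0)"
proof (cases "j1 \<le> q")
  case True
  let ?i = "(c - j0) + p * (q - j1)" and ?j = "j0 + p * j1"
  have "dwork_term A \<Psi> (c + p * q) ?j = A ?i * A ?j * \<Psi> ?i ?j"
    using sub_digits_no_borrow[OF assms] True unfolding dwork_term_def by simp
  moreover have "A ?i = g ?i * A (q - j1)" by (rule A_digit) (use assms in linarith)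
  moreover have "A ?j = g ?j * A j1" by (rule A_digit) (use assms in linarith)
  ultimately show ?thesis using True by (simp add: mult_ac)
qed (use sub_digits_no_borrow[OF assms] in \<open>simp add: dwork_term_def\<close>)

lemma dwork_term_borrow:
  assumes "c < j0" "j0 < p"
  shows "dwork_term A \<Psi> (c + p * q) (j0 + p * j1) =
    (if j1 < q then A (q - 1 - j1) * A j1 * (g ((c + p - j0) + p * (q - 1 - j1)) * g (j0 + p * j1) *
       \<Psi> ((c + p - j0) + p * (q - 1 - j1)) (j0 + p * j1)) else 0)"
proof (cases "j1 < q")
  case True
  let ?i = "(c + p - j0) + p * (q - 1 - j1)" and ?j = "j0 + p * j1"
  have "dwork_term A \<Psi> (c + p * q) ?j = A ?i * A ?j * \<Psi> ?i ?j"
    using sub_digits_borrow[OF assms] True unfolding dwork_term_def by simp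
  moreover have "A ?i = g ?i * A (q - 1 - j1)" by (rule A_digit) (use assms in linarith)
  moreover have "A ?j = g ?j * A j1" by (rule A_digit) (use assms in linarith)
  ultimately show ?thesis using True by (simp add: mult_ac)
qed (use sub_digits_borrow[OF assms] in \<open>simp add: dwork_term_def\<close>)

lemma dwork_term_lowest_digit_sum:
  assumes c: "c < p"
  shows "(\<Sum>j0<p. dwork_term A \<Psi> (c + p * q) (j0 + p * j1)) =
    of_nat p * dwork_term A (kernel_contraction p g \<Psi> 0 c) q j1 +
    (if q = 0 then 0 else of_nat p * dwork_term A (kernel_contraction p g \<Psi> (Suc c) (p - 1)) (q - 1) j1)"
proof -
  have "{..<p} = {0..c} \<union> {Suc c..p - 1}" using c by auto
  then have "(\<Sum>j0<p. dwork_term A \<Psi> (c + p * q) (j0 + p * j1)) =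
      (\<Sum>j0\<in>{0..c}. dwork_term A \<Psi> (c + p * q) (j0 + p * j1)) +
      (\<Sum>j0\<in>{Suc c..p - 1}. dwork_term A \<Psi> (c + p * q) (j0 + p * j1))"
    by (simp add: sum.union_disjoint)
  also have "(\<Sum>j0\<in>{0..c}. dwork_term A \<Psi> (c + p * q) (j0 + p * j1)) =
      (\<Sum>j0\<in>{0..c}. if j1 \<le> q then A (q - j1) * A j1 * (g ((c - j0) + p * (q - j1)) *
         g (j0 + p * j1) * \<Psi> ((c - j0) + p * (q - j1)) (j0 + p * j1)) else 0)"
    using c by (intro sum.cong refl dwork_term_no_borrow) auto
  also have "\<dots> = of_nat p * dwork_term A (kernel_contraction p g \<Psi> 0 c) q j1"
    using p_pos by (cases "j1 \<le> q")
      (simp_all add: dwork_term_def kernel_contraction_def flip: sum_distrib_left)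
  also have "(\<Sum>j0\<in>{Suc c..p - 1}. dwork_term A \<Psi> (c + p * q) (j0 + p * j1)) =
      (\<Sum>j0\<in>{Suc c..p - 1}. if j1 < q then A (q - 1 - j1) * A j1 * (g ((c + p - j0) + p * (q - 1 - j1)) *
         g (j0 + p * j1) * \<Psi> ((c + p - j0) + p * (q - 1 - j1)) (j0 + p * j1)) else 0)"
    using p_pos by (intro sum.cong refl dwork_term_borrow) auto
  also have "\<dots> = (if q = 0 then 0
      else of_nat p * dwork_term A (kernel_contraction p g \<Psi> (Suc c) (p - 1)) (q - 1) j1)"
  proof -
    have "Suc c + (p - 1) = c + p" using p_pos by simp
    then show ?thesis
      using p_pos by (cases "j1 < q")
        (auto simp: dwork_term_def kernel_contraction_def simp flip: sum_distrib_left)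
  qed
  finally show ?thesis .
qed

lemma dwork_sum_Suc:
  assumes "c < p"
  shows "dwork_sum p A \<Psi> (Suc s) (c + p * q) =
    of_nat p * dwork_sum p A (kernel_contraction p g \<Psi> 0 c) s q +
    (if q = 0 then 0 else of_nat p * dwork_sum p A (kernel_contraction p g \<Psi> (Suc c) (p - 1)) s (q - 1))"
proof -
  have "dwork_sum p A \<Psi> (Suc s) (c + p * q) =
      (\<Sum>j1<p ^ s. \<Sum>j0<p. dwork_term A \<Psi> (c + p * q) (j0 + p * j1))"
    unfolding dwork_sum_def power_Suc2 by (rule sum_lessThan_mult_digits)
  then show ?thesis
    by (simp add: dwork_term_lowest_digit_sum[OF assms] dwork_sum_def sum.distrib sum_distrib_left)
qed

lemma dwork_sum_p_divisible:
  "dwork_kernel p \<Psi> \<Longrightarrow> p_divisible p (Suc s) (dwork_sum p A \<Psi> s M)"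
proof (induction s arbitrary: \<Psi> M)
  case 0
  then show ?case
    using dwork_kernel_p_divisible[OF 0] A_integral prime
    by (simp add: dwork_sum_def dwork_term_def p_divisible_mult_integral p_integral_mult)
next
  case (Suc s)
  obtain c q where c: "c < p" and M: "M = c + p * q"
    using p_pos by (metis mod_less_divisor mod_mult_div_eq add.commute)
  have "p_divisible p (Suc (Suc s)) (of_nat p * dwork_sum p A (kernel_contraction p g \<Psi> lo hi) s M')"
    for lo hi M'
    using Suc dwork_kernel_contraction prime by (blast intro: p_divisible_times_p)
  then show ?case
    unfolding M dwork_sum_Suc[OF c] using prime by (simp add: p_divisible_add)
qed

lemma cross_difference_coeff:
  assumes a: "a < p"
  shows "(Abs_fps A * (fps_cutoff (p ^ s) (Abs_fps A) oo fps_X ^ p) -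
          fps_cutoff (p ^ Suc s) (Abs_fps A) * (Abs_fps A oo fps_X ^ p)) $ (a + p * M) =
         dwork_sum p A (\<lambda>i j. g (a + p * i) - g (a + p * j)) s M"
proof -
  define h where "h i = g (a + p * i)" for i
  define P where "P = p ^ s"
  define X where "X j = A (M - j) * A j * (h (M - j) - h j)" for j
  have A_a: "A (a + p * i) = h i * A i" for i
    unfolding h_def using A_digit[OF a] .
  have "(Abs_fps A * (fps_cutoff P (Abs_fps A) oo fps_X ^ p) -
          fps_cutoff (p * P) (Abs_fps A) * (Abs_fps A oo fps_X ^ p)) $ (a + p * M) =
      (\<Sum>i\<le>M. h i * A i * (if M - i < P then A (M - i) else 0)) -
      (\<Sum>i\<le>M. (if i < P then h i * A i else 0) * A (M - i))"
    by (simp add: fps_mult_compose_X_power_nth[OF a] digit_less_mult_iff[OF a] A_a cong: if_cong)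
  also have "(\<Sum>i\<le>M. h i * A i * (if M - i < P then A (M - i) else 0)) =
      (\<Sum>j\<le>M. h (M - j) * A (M - j) * (if j < P then A j else 0))"
    by (rule sum.reindex_bij_witness[where i = "\<lambda>j. M - j" and j = "\<lambda>i. M - i"]) auto
  also have "\<dots> - (\<Sum>i\<le>M. (if i < P then h i * A i else 0) * A (M - i)) =
      (\<Sum>j\<le>M. if j < P then X j else 0)"
    unfolding sum_subtractf[symmetric] X_def by (intro sum.cong refl) (auto simp: algebra_simps)
  also have "\<dots> = sum X ({..M} \<inter> {..<P})"
    by (simp add: sum.inter_restrict)
  also have "\<dots> = sum X ({..<P} \<inter> {..M})"
    by (simp only: Int_commute)
  also have "\<dots> = (\<Sum>j<P. if j \<le> M then X j else 0)"
    by (simp add: sum.inter_restrict)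
  finally show ?thesis unfolding dwork_sum_def dwork_term_def X_def h_def P_def by simp
qed

lemma dwork_kernel_digit: "dwork_kernel p (\<lambda>i j. g (a + p * i) - g (a + p * j))"
  unfolding dwork_kernel_def
proof (intro conjI allI impI)
  fix i j show "p_integral p (g (a + p * i) - g (a + p * j))"
    using g_integral prime by blast
next
  fix r i j i' j'
  assume "i mod p ^ r = i' mod p ^ r" "j mod p ^ r = j' mod p ^ r"
  then have "p_divisible p (Suc r) ((g (a + p * i) - g (a + p * i')) - (g (a + p * j) - g (a + p * j')))"
    using g_cong digit_shift_cong prime by (blast intro: p_divisible_diff)
  then show "p_divisible p (Suc r) (g (a + p * i) - g (a + p * j) - (g (a + p * i') - g (a + p * j')))"
    by (simp add: algebra_simps)
qed simp

lemma cross_difference_p_divisible: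
  "p_divisible p (Suc s) ((Abs_fps A * (fps_cutoff (p ^ s) (Abs_fps A) oo fps_X ^ p) -
     fps_cutoff (p ^ Suc s) (Abs_fps A) * (Abs_fps A oo fps_X ^ p)) $ N)"
proof -
  have "N = N mod p + p * (N div p)" "N mod p < p" using p_pos by simp_all
  then show ?thesis
    using cross_difference_coeff dwork_sum_p_divisible[OF dwork_kernel_digit] by metis
qed

end

section \<open>The hypergeometric coefficients\<close>

lemma fact_add_eq_prod: "fact (m + e) = (fact m :: nat) * (\<Prod>t\<in>{1..e}. m + t)"
  by (induction e) (simp_all add: atLeastAtMostSuc_conv algebra_simps)

lemma hyp_coeff_Suc:
  "hyp_coeff k (Suc n) = hyp_coeff k n *
     (\<Prod>j\<in>{1..k-1}. of_nat j / of_nat k + of_nat n) / of_nat (Suc n) ^ (k - 1)"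
  unfolding hyp_coeff_def pochhammer_Suc prod.distrib fact_Suc of_nat_Suc[symmetric] power_mult_distrib
  by (simp add: field_simps)

lemma fact_mult_Suc:
  assumes "k > 0"
  shows "fact (k * Suc n) = (fact (k * n) :: nat) * (k * Suc n * (\<Prod>j\<in>{1..k-1}. k * n + j))"
proof -
  have k_split: "{1..k} = insert k {1..k-1}" using assms by auto
  have "(\<Prod>t\<in>{1..k}. k * n + t) = k * Suc n * (\<Prod>j\<in>{1..k-1}. k * n + j)"
    unfolding k_split by (subst prod.insert) (auto simp: algebra_simps)
  then show ?thesis using fact_add_eq_prod[of "k * n" k] by (simp add: algebra_simps)
qed

lemma hyp_coeff_eq_fact:
  assumes k: "k > 0"
  shows "hyp_coeff k n = fact (k * n) / (fact n ^ k * of_nat k ^ (k * n))"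
proof (induction n)
  case 0
  then show ?case by (simp add: hyp_coeff_def)
next
  case (Suc n)
  define P where "P = (\<Prod>j\<in>{1..k-1}. k * n + j)"
  have "(\<Prod>j\<in>{1..k-1}. of_nat j / of_nat k + of_nat n :: rat) =
      (\<Prod>j\<in>{1..k-1}. rat_of_nat (k * n + j) / of_nat k)"
    using k by (intro prod.cong refl) (simp add: field_simps)
  also have "\<dots> = of_nat P / of_nat k ^ (k - 1)"
    unfolding P_def by (simp add: prod_dividef)
  finally have prod_eq: "(\<Prod>j\<in>{1..k-1}. of_nat j / of_nat k + of_nat n :: rat) =
      of_nat P / of_nat k ^ (k - 1)" .
  have "(fact (k * Suc n) :: rat) = of_nat (fact (k * n) * (k * Suc n * P))"
    unfolding P_def fact_mult_Suc[OF k, symmetric] by simp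
  then have fact_eq: "(fact (k * Suc n) :: rat) = fact (k * n) * (of_nat k * of_nat (Suc n) * of_nat P)"
    by (simp only: of_nat_mult of_nat_fact)
  have k_power: "(of_nat k ^ (k * Suc n) :: rat) = of_nat k ^ (k * n) * of_nat k * of_nat k ^ (k - 1)"
  proof -
    have "k * Suc n = k * n + Suc (k - 1)" using k by simp
    then show ?thesis by (simp only: power_add power_Suc mult_ac)
  qed
  have fact_power: "(fact (Suc n) :: rat) ^ k = fact n ^ k * of_nat (Suc n) * of_nat (Suc n) ^ (k - 1)"
    using k by (simp add: power_mult_distrib mult_ac flip: power_Suc)
  have "a / (b * c) * (P / d) / e = a * (x * y * P) / ((b * y * e) * (c * x * d))"
    if "x \<noteq> 0" "y \<noteq> 0" "b \<noteq> 0" "c \<noteq> 0" "d \<noteq> 0" "e \<noteq> 0" for a b c d e x y P :: rat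
    using that by (simp add: field_simps)
  then show ?case
    unfolding hyp_coeff_Suc Suc prod_eq fact_eq k_power fact_power using k by simp
qed

definition fact_prime_to :: "nat \<Rightarrow> nat \<Rightarrow> nat" where
  "fact_prime_to p x = (\<Prod>i\<in>{1..x}. if p dvd i then 1 else i)"

lemma fact_prime_to_0 [simp]: "fact_prime_to p 0 = 1"
  unfolding fact_prime_to_def by simp

lemma fact_prime_to_Suc:
  "fact_prime_to p (Suc x) = fact_prime_to p x * (if p dvd Suc x then 1 else Suc x)"
  unfolding fact_prime_to_def by (simp add: atLeastAtMostSuc_conv)

lemma fact_eq_fact_prime_to:
  assumes "p > 0"
  shows "fact x = p ^ (x div p) * fact (x div p) * (fact_prime_to p x :: nat)"
proof (induction x)
  case (Suc x)
  show ?case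
  proof (cases "p dvd Suc x")
    case True
    then have d: "Suc x div p = Suc (x div p)" using assms by (simp add: div_Suc dvd_eq_mod_eq_0)
    then have "Suc x = p * Suc (x div p)" using True by (metis dvd_mult_div_cancel)
    then have "fact (Suc x) = p * Suc (x div p) * (fact x :: nat)" by (metis fact_Suc of_nat_id)
    then show ?thesis using Suc True d by (simp add: fact_prime_to_Suc algebra_simps)
  next
    case False
    then have "Suc x div p = x div p" using assms by (simp add: div_Suc dvd_eq_mod_eq_0)
    then show ?thesis using Suc False by (simp add: fact_prime_to_Suc algebra_simps)
  qed
qed simp

lemma fact_prime_to_not_dvd:
  assumes "prime p"
  shows "\<not> p dvd fact_prime_to p x"
  unfolding fact_prime_to_def prime_dvd_prod_iff[OF finite_atLeastAtMost assms]
  using assms by (auto simp: prime_nat_iff)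

lemma fact_prime_to_add_cong:
  assumes "p dvd L"
  shows "[fact_prime_to p (x + L) = fact_prime_to p x * fact_prime_to p L] (mod L)"
proof (induction x)
  case (Suc x)
  have "p dvd Suc (x + L) \<longleftrightarrow> p dvd Suc x"
    using dvd_add_left_iff[OF assms, of "Suc x"] by simp
  moreover have "[Suc (x + L) = Suc x] (mod L)"
    unfolding cong_def by (simp only: add_Suc[symmetric] mod_add_self2)
  ultimately have "[(if p dvd Suc (x + L) then 1 else Suc (x + L)) = (if p dvd Suc x then 1 else Suc x)] (mod L)"
    by simp
  with Suc have "[fact_prime_to p (Suc x + L) =
      fact_prime_to p x * fact_prime_to p L * (if p dvd Suc x then 1 else Suc x)] (mod L)"
    unfolding add_Suc fact_prime_to_Suc by (rule cong_mult)
  then show ?case by (simp add: fact_prime_to_Suc mult_ac)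
qed simp

lemma fact_prime_to_add_mult_cong:
  assumes "p dvd L"
  shows "[fact_prime_to p (x + m * L) = fact_prime_to p x * fact_prime_to p L ^ m] (mod L)"
proof (induction m)
  case (Suc m)
  have "[fact_prime_to p ((x + m * L) + L) = fact_prime_to p (x + m * L) * fact_prime_to p L] (mod L)"
    by (rule fact_prime_to_add_cong[OF assms])
  also have "[fact_prime_to p (x + m * L) * fact_prime_to p L =
      fact_prime_to p x * fact_prime_to p L ^ m * fact_prime_to p L] (mod L)"
    using Suc by (rule cong_scalar_right)
  finally show ?case by (simp add: algebra_simps)
qed simp

definition dwork_ratio :: "nat \<Rightarrow> nat \<Rightarrow> nat \<Rightarrow> rat" where
  "dwork_ratio k p n = hyp_coeff k n / hyp_coeff k (n div p)"

text \<open>With u = n div p, the p-parts of the factorials in hyp_coeff k n / hyp_coeff k u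
  cancel except for the factors p (k u + t) of (k n)!, for t up to k (n mod p) div p.\<close>
definition dwork_ratio_num :: "nat \<Rightarrow> nat \<Rightarrow> nat \<Rightarrow> nat" where
  "dwork_ratio_num k p n =
     (\<Prod>t\<in>{1..k * (n mod p) div p}. p * (k * (n div p) + t)) * fact_prime_to p (k * n)"

definition dwork_ratio_den :: "nat \<Rightarrow> nat \<Rightarrow> nat \<Rightarrow> nat" where
  "dwork_ratio_den k p n = fact_prime_to p n ^ k * k ^ (k * (n - n div p))"

lemma hyp_coeff_pos: "k > 0 \<Longrightarrow> hyp_coeff k n > 0"
  by (simp add: hyp_coeff_eq_fact)

lemma fact_mult_eq_fact_prime_to:
  fixes k n :: nat
  assumes p: "p > 0"
  defines "u \<equiv> n div p" and "e \<equiv> k * (n mod p) div p"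
  shows "fact (k * n) =
    p ^ (k * u + e) * fact (k * u) * (\<Prod>t\<in>{1..e}. k * u + t) * (fact_prime_to p (k * n) :: nat)"
proof -
  have "k * n = k * (n mod p + p * u)" unfolding u_def by simp
  then have "k * n = k * (n mod p) + p * (k * u)" by (simp add: algebra_simps)
  then have "k * n div p = k * u + e" unfolding e_def using p by simp
  then show ?thesis
    using fact_eq_fact_prime_to[OF p, of "k * n"] fact_add_eq_prod[of "k * u" e] by simp
qed

lemma dwork_ratio_eq:
  assumes "prime p" "k > 0"
  shows "dwork_ratio k p n = of_nat (dwork_ratio_num k p n) / of_nat (dwork_ratio_den k p n)"
proof -
  have p: "p > 0" using assms prime_gt_0_nat by blast
  define u where "u = n div p"
  define e where "e = k * (n mod p) div p"
  define Q where "Q = (\<Prod>t\<in>{1..e}. k * u + t)"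
  have fact_kn: "fact (k * n) = p ^ (k * u + e) * fact (k * u) * Q * fact_prime_to p (k * n)"
    unfolding u_def e_def Q_def by (rule fact_mult_eq_fact_prime_to[OF p])
  have fact_n: "fact n = p ^ u * fact u * fact_prime_to p n"
    using fact_eq_fact_prime_to[OF p, of n] unfolding u_def by simp
  have k_power: "k ^ (k * n) = k ^ (k * u) * k ^ (k * (n - u))"
  proof -
    have "u \<le> n" unfolding u_def by simp
    then have "k * n = k * u + k * (n - u)" by (simp add: algebra_simps)
    then show ?thesis by (simp only: power_add)
  qed
  have num: "dwork_ratio_num k p n = p ^ e * Q * fact_prime_to p (k * n)"
    unfolding dwork_ratio_num_def e_def Q_def u_def by (simp add: prod.distrib)
  have den: "dwork_ratio_den k p n = fact_prime_to p n ^ k * k ^ (k * (n - u))"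
    unfolding dwork_ratio_den_def u_def ..
  have pos: "fact_prime_to p n > 0" "fact_prime_to p (k * n) > 0" "Q > 0"
    unfolding fact_prime_to_def Q_def by (auto intro!: prod_pos)
  have hn: "hyp_coeff k n = of_nat (p ^ (k * u + e) * fact (k * u) * Q * fact_prime_to p (k * n)) /
      (of_nat (p ^ u * fact u * fact_prime_to p n) ^ k * of_nat (k ^ (k * u) * k ^ (k * (n - u))))"
    unfolding hyp_coeff_eq_fact[OF assms(2)] using fact_kn fact_n k_power
    by (metis of_nat_fact of_nat_power)
  have hu: "hyp_coeff k u = of_nat (fact (k * u)) / (of_nat (fact u) ^ k * of_nat (k ^ (k * u)))"
    unfolding hyp_coeff_eq_fact[OF assms(2)] by simp
  have "dwork_ratio k p n = of_nat (p ^ e * Q * fact_prime_to p (k * n)) /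
      of_nat (fact_prime_to p n ^ k * k ^ (k * (n - u)))"
    unfolding dwork_ratio_def u_def[symmetric] hn hu using pos p assms(2)
    by (simp add: field_simps power_mult_distrib power_add power_mult[symmetric] mult.commute[of u k])
  then show ?thesis unfolding num den .
qed

lemma dwork_ratio_den_not_dvd:
  assumes "prime p" "\<not> p dvd k"
  shows "\<not> p dvd dwork_ratio_den k p n"
  unfolding dwork_ratio_den_def
  using assms fact_prime_to_not_dvd[OF assms(1)] prime_dvd_mult_iff[OF assms(1)] prime_dvd_power[OF assms(1)]
  by blast

lemma dwork_ratio_p_integral:
  assumes "prime p" "\<not> p dvd k" "k > 0"
  shows "p_integral p (dwork_ratio k p n)"
  using p_integral_fraction[of p "int (dwork_ratio_den k p n)" "int (dwork_ratio_num k p n)"]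
    dwork_ratio_den_not_dvd[OF assms(1,2)]
  by (simp add: dwork_ratio_eq[OF assms(1,3)])

lemma dwork_ratio_num_shift_cong:
  fixes r :: nat
  assumes p: "prime p"
  defines "L \<equiv> p ^ Suc r"
  shows "[dwork_ratio_num k p (n + m * L) = dwork_ratio_num k p n * fact_prime_to p L ^ (k * m)] (mod L)"
proof -
  have L: "L = p * p ^ r" unfolding L_def by simp
  have n_mod: "(n + m * L) mod p = n mod p" and n_div: "(n + m * L) div p = n div p + m * p ^ r"
    unfolding L_def using add_mult_prime_power_div_mod[OF prime_gt_0_nat[OF p]] by simp_all
  have "[(\<Prod>t\<in>{1..k * (n mod p) div p}. p * (k * (n div p + m * p ^ r) + t)) =
      (\<Prod>t\<in>{1..k * (n mod p) div p}. p * (k * (n div p) + t))] (mod L)"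
  proof (rule cong_prod)
    fix t
    have "p * (k * (n div p + m * p ^ r) + t) = p * (k * (n div p) + t) + (k * m) * L"
      unfolding L by (simp add: algebra_simps)
    then show "[p * (k * (n div p + m * p ^ r) + t) = p * (k * (n div p) + t)] (mod L)"
      by (simp add: cong_def)
  qed
  moreover have "[fact_prime_to p (k * (n + m * L)) =
      fact_prime_to p (k * n) * fact_prime_to p L ^ (k * m)] (mod L)"
  proof -
    have "k * (n + m * L) = k * n + (k * m) * L" by (simp add: algebra_simps)
    then show ?thesis unfolding L_def by (simp add: fact_prime_to_add_mult_cong)
  qed
  ultimately show ?thesis
    unfolding dwork_ratio_num_def n_mod n_div mult.assoc by (rule cong_mult)
qed

lemma dwork_ratio_den_shift_cong:
  fixes r :: nat
  assumes p: "prime p" and k: "\<not> p dvd k"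
  defines "L \<equiv> p ^ Suc r"
  shows "[dwork_ratio_den k p (n + m * L) = dwork_ratio_den k p n * fact_prime_to p L ^ (k * m)] (mod L)"
proof -
  define u where "u = n div p"
  define T where "T = totient L"
  obtain q where q: "p = Suc q" using p prime_gt_0_nat gr0_implies_Suc by blast
  have "L = p ^ r + p ^ r * q" "T = p ^ r * q"
    unfolding T_def L_def totient_prime_power_Suc[OF p] using q by simp_all
  moreover have "(n + m * L) div p = u + m * p ^ r"
    unfolding L_def u_def using add_mult_prime_power_div_mod[OF prime_gt_0_nat[OF p]] by simp
  moreover have "u \<le> n" unfolding u_def by simp
  ultimately have "(n + m * L) - (n + m * L) div p = (n - u) + m * T"
    by (simp add: algebra_simps)
  then have "k ^ (k * ((n + m * L) - (n + m * L) div p)) = k ^ (k * (n - u)) * (k ^ T) ^ (k * m)"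
    by (simp add: algebra_simps power_add flip: power_mult)
  also have "[\<dots> = k ^ (k * (n - u)) * 1 ^ (k * m)] (mod L)"
  proof (intro cong_scalar_left cong_pow)
    have "coprime k p" using prime_imp_coprime[OF p k] by (simp add: coprime_commute)
    then have "coprime k L" unfolding L_def by simp
    then show "[k ^ T = 1] (mod L)" unfolding T_def by (rule euler_theorem)
  qed
  finally have "[k ^ (k * ((n + m * L) - (n + m * L) div p)) = k ^ (k * (n - u))] (mod L)"
    by simp
  moreover have "[fact_prime_to p (n + m * L) ^ k = (fact_prime_to p n * fact_prime_to p L ^ m) ^ k] (mod L)"
    unfolding L_def by (intro cong_pow fact_prime_to_add_mult_cong) simp
  ultimately have "[dwork_ratio_den k p (n + m * L) =
      (fact_prime_to p n * fact_prime_to p L ^ m) ^ k * k ^ (k * (n - u))] (mod L)"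
    unfolding dwork_ratio_den_def u_def by (simp add: cong_mult)
  also have "(fact_prime_to p n * fact_prime_to p L ^ m) ^ k * k ^ (k * (n - u)) =
      dwork_ratio_den k p n * fact_prime_to p L ^ (k * m)"
    unfolding dwork_ratio_den_def u_def by (simp add: power_mult_distrib mult_ac flip: power_mult)
  finally show ?thesis .
qed

lemma dwork_ratio_shift_cong:
  assumes p: "prime p" and k: "\<not> p dvd k" "k > 0"
  shows "p_divisible p (Suc r) (dwork_ratio k p n - dwork_ratio k p (n + m * p ^ Suc r))"
proof -
  define L where "L = p ^ Suc r"
  define \<omega> where "\<omega> = fact_prime_to p L ^ (k * m)"
  define N where "N = dwork_ratio_num k p n"
  define N' where "N' = dwork_ratio_num k p (n + m * L)"
  define D where "D = dwork_ratio_den k p n"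
  define D' where "D' = dwork_ratio_den k p (n + m * L)"
  have "[N * D' = N * (D * \<omega>)] (mod L)"
    unfolding D'_def D_def \<omega>_def L_def by (intro cong_scalar_left dwork_ratio_den_shift_cong p k)
  moreover have "[N' * D = (N * \<omega>) * D] (mod L)"
    unfolding N'_def N_def \<omega>_def L_def by (intro cong_scalar_right dwork_ratio_num_shift_cong p)
  ultimately have "[N * D' = N' * D] (mod L)"
    by (metis cong_sym cong_trans mult.commute mult.left_commute)
  then have "int p ^ Suc r dvd int (N * D') - int (N' * D)"
    unfolding L_def by (metis cong_iff_dvd_diff cong_int_iff of_nat_power)
  then have "p_divisible p (Suc r) (of_int (int (N * D') - int (N' * D)) / of_int (int (D * D')))"
    using p k dwork_ratio_den_not_dvd
    by (intro p_divisible_divide_int p_divisible_of_int) (simp_all add: D_def D'_def prime_dvd_mult_iff)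
  moreover have "D \<noteq> 0" "D' \<noteq> 0"
    unfolding D_def D'_def using dwork_ratio_den_not_dvd[OF p k(1)] by (metis dvd_0_right)+
  ultimately show ?thesis
    unfolding dwork_ratio_eq[OF p k(2)] N_def N'_def D_def D'_def L_def
    by (simp add: field_simps)
qed

lemma dwork_ratio_cong:
  assumes "prime p" "\<not> p dvd k" "k > 0" and "n mod p ^ Suc r = n' mod p ^ Suc r"
  shows "p_divisible p (Suc r) (dwork_ratio k p n - dwork_ratio k p n')"
proof -
  have shift: "p_divisible p (Suc r) (dwork_ratio k p a - dwork_ratio k p b)"
    if ab: "a \<le> b" and mod: "a mod p ^ Suc r = b mod p ^ Suc r" for a b
  proof -
    have "p ^ Suc r dvd b - a" using mod_eq_dvd_iff_nat[OF ab] mod[symmetric] by blast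
    then obtain m where "b - a = p ^ Suc r * m" by (elim dvdE)
    then have "b = a + m * p ^ Suc r" using ab by (simp add: mult.commute)
    then show ?thesis using dwork_ratio_shift_cong[OF assms(1-3)] by simp
  qed
  show ?thesis
  proof (cases "n \<le> n'")
    case False
    then have "p_divisible p (Suc r) (- (dwork_ratio k p n' - dwork_ratio k p n))"
      using shift assms(4) by (intro p_divisible_uminus) simp
    then show ?thesis by simp
  qed (use shift assms(4) in simp)
qed

lemma hyp_coeff_factor: "k > 0 \<Longrightarrow> hyp_coeff k n = dwork_ratio k p n * hyp_coeff k (n div p)"
  using hyp_coeff_pos[of k "n div p"] by (simp add: dwork_ratio_def)

lemma hyp_coeff_p_integral:
  assumes "prime p" "\<not> p dvd k" "k > 0"
  shows "p_integral p (hyp_coeff k n)"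
proof (induction n rule: less_induct)
  case (less n)
  show ?case
  proof (cases "n = 0")
    case True
    then show ?thesis using assms(1) by (simp add: hyp_coeff_def)
  next
    case False
    then have "p_integral p (hyp_coeff k (n div p))"
      using assms(1) prime_gt_1_nat by (intro less.IH) simp
    then show ?thesis
      unfolding hyp_coeff_factor[OF assms(3), of n p]
      by (rule p_integral_mult[OF assms(1) dwork_ratio_p_integral[OF assms]])
  qed
qed

lemma dwork_factorization_hyp_coeff:
  assumes "prime p" "\<not> p dvd k" "k > 0"
  shows "dwork_factorization p (hyp_coeff k) (dwork_ratio k p)"
  using assms by unfold_locales
    (auto intro: hyp_coeff_factor hyp_coeff_p_integral dwork_ratio_p_integral dwork_ratio_cong)

theorem mainTheorem2:
  fixes k p :: nat
  assumes "k \<ge> 2" and "prime p" and "odd p" and "\<not> p dvd k"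
  shows "(\<forall>n. p_integral p (hypF k $ n)) \<and>
         (\<forall>s\<ge>1. fps_cong_mod p s
            (hypF k / (hypF k oo fps_X ^ p))
            (fps_cutoff (p ^ s) (hypF k) / (fps_cutoff (p ^ (s - 1)) (hypF k) oo fps_X ^ p)))"
proof -
  have k: "k > 0" and p: "prime p" using assms by simp_all
  interpret dwork_factorization p "hyp_coeff k" "dwork_ratio k p"
    using dwork_factorization_hyp_coeff[OF p assms(4) k] .
  have F: "p_integral p (hypF k $ n)" for n
    by (simp add: hypF_def A_integral)
  have F0: "hypF k $ 0 = 1" by (simp add: hypF_def hyp_coeff_def)
  have cong: "fps_cong_mod p (Suc s)
      (hypF k / (hypF k oo fps_X ^ p))
      (fps_cutoff (p ^ Suc s) (hypF k) / (fps_cutoff (p ^ s) (hypF k) oo fps_X ^ p))" for s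
    using F F0 p p_pos cross_difference_p_divisible[of s] unfolding hypF_def[symmetric]
    by (intro fps_cong_mod_divide p fps_compose_X_power_p_integral) auto
  have "fps_cong_mod p s
      (hypF k / (hypF k oo fps_X ^ p))
      (fps_cutoff (p ^ s) (hypF k) / (fps_cutoff (p ^ (s - 1)) (hypF k) oo fps_X ^ p))" if s: "s \<ge> 1" for s
  proof -
    obtain s' where "s = Suc s'" using s by (cases s) auto
    then show ?thesis using cong by simp
  qed
  with F show ?thesis by blast
qed

end
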